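(* Consider a market with $M$ consumers $\mathcal{M}=\{1,\dots,M\}$ and $N$ suppliers $\mathcal{N}=\{1,\dots,N\}$, constants $d_0>0$, $\kappa_0>0$ with $Md_0<N\kappa_0$. Assume: for each $i\in\mathcal{M}$, $U_i$ is concave, strictly increasing and continuously differentiable on $[d_0,\infty)$ with $U_i(d_0)=0$; for each $i\in\mathcal{N}$, $C_i:\mathbb{R}\to\mathbb{R}$ is convex, strictly increasing and continuously differentiable with $C_i(s)\ge0$ for $s\ge0$ and $C_i(s)=0$ for $s\le0$. Assume further that no supplier is pivotal: $\frac{(N-1)\kappa_0}{Md_0}>1$. Define the game $\mathcal{G}$ whose players are $\mathcal{M}\cup\mathcal{N}$; consumer $i$ chooses $\theta_d^i\ge0$ and supplier $i$ chooses $\theta_s^i\ge 0$. For a profile with $\sum_i\theta_d^i+\sum_i\theta_s^i>0$, the price is $p(\boldsymbol{\theta}_d,\boldsymbol{\theta}_s)=\frac{\sum_i\theta_d^i+\sum_i\theta_s^i}{N\kappa_0-Md_0}$ and the payoffs are $$\pi_d^i=U_i\!\left(d_0+\frac{\theta_d^i}{p}\right)-p\,d_0-\theta_d^i\ (i\in\mathcal{M}),\qquad \pi_s^i=p\,\kappa_0-\theta_s^i-C_i\!\left(\kappa_0-\frac{\theta_s^i}{p}\right)\ (i\in\mathcal{N}),$$ with $p=p(\boldsymbol{\theta}_d,\boldsymbol{\theta}_s)$; if all parameters are zero, by convention each consumer is allocated $d_0$, each supplier $\kappa_0$, and the price is $0$. Then $\mathcal{G}$ has a unique Nash equilibrium $(\tilde{\boldsymbol{\theta}}_d,\tilde{\boldsymbol{\theta}}_s)$.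 Moreover, writing $\tilde p=p(\tilde{\boldsymbol{\theta}}_d,\tilde{\boldsymbol{\theta}}_s)$, the allocation $\tilde d_i=d_0+\tilde\theta_d^i/\tilde p$ ($i\in\mathcal{M}$), $\tilde s_i=\kappa_0-\tilde\theta_s^i/\tilde p$ ($i\in\mathcal{N}$) is the unique solution of the convex program $$\max_{\mathbf{d},\mathbf{s}}\ \sum_{i=1}^M\tilde U_i(d_i)-\sum_{i=1}^N\tilde C_i(s_i)\quad\text{s.t.}\quad \sum_{i=1}^M d_i=\sum_{i=1}^N s_i,\ \ 0\le s_i\le\kappa_0\ (i\in\mathcal{N}),\ \ d_i\ge d_0\ (i\in\mathcal{M}),$$ where $$\tilde U_i(d_i)=\left(1-\frac{d_i}{N\kappa_0-(M-1)d_0}\right)U_i(d_i)+\frac{1}{N\kappa_0-(M-1)d_0}\int_{d_0}^{d_i}U_i(z)\,dz,$$ $$\tilde C_i(s_i)=\left(1+\frac{s_i}{(N-1)\kappa_0-Md_0}\right)C_i(s_i)-\frac{1}{(N-1)\kappa_0-Md_0}\int_0^{s_i}C_i(z)\,dz.$$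
   Context: A Nash equilibrium is a profile $(\tilde{\boldsymbol{\theta}}_d,\tilde{\boldsymbol{\theta}}_s)$ of nonnegative parameters such that no consumer and no supplier can strictly increase its own payoff by unilaterally changing its own parameter to another nonnegative value. *)

theory Defs
  imports "HOL-Analysis.Analysis"
begin

text \<open>Consumers are indexed by {1..M}, suppliers by {1..N}. Bids are functions
  nat => real; only their values on the index sets matter.\<close>

definition total_bid :: "nat \<Rightarrow> nat \<Rightarrow> (nat \<Rightarrow> real) \<Rightarrow> (nat \<Rightarrow> real) \<Rightarrow> real" where
  "total_bid M N thd ths = (\<Sum>i\<in>{1..M}. thd i) + (\<Sum>i\<in>{1..N}. ths i)"

definition price :: "nat \<Rightarrow> nat \<Rightarrow> real \<Rightarrow> real \<Rightarrow> (nat \<Rightarrow> real) \<Rightarrow> (nat \<Rightarrow> real) \<Rightarrow> real" where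
  "price M N d0 k0 thd ths =
     (if total_bid M N thd ths = 0 then 0
      else total_bid M N thd ths / (real N * k0 - real M * d0))"

definition demand_alloc :: "nat \<Rightarrow> nat \<Rightarrow> real \<Rightarrow> real \<Rightarrow> (nat \<Rightarrow> real) \<Rightarrow> (nat \<Rightarrow> real) \<Rightarrow> nat \<Rightarrow> real" where
  "demand_alloc M N d0 k0 thd ths i =
     (if total_bid M N thd ths = 0 then d0
      else d0 + thd i / price M N d0 k0 thd ths)"

definition supply_alloc :: "nat \<Rightarrow> nat \<Rightarrow> real \<Rightarrow> real \<Rightarrow> (nat \<Rightarrow> real) \<Rightarrow> (nat \<Rightarrow> real) \<Rightarrow> nat \<Rightarrow> real" where
  "supply_alloc M N d0 k0 thd ths i =
     (if total_bid M N thd ths = 0 then k0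
      else k0 - ths i / price M N d0 k0 thd ths)"

definition payoff_d :: "nat \<Rightarrow> nat \<Rightarrow> real \<Rightarrow> real \<Rightarrow> (nat \<Rightarrow> real \<Rightarrow> real)
    \<Rightarrow> (nat \<Rightarrow> real) \<Rightarrow> (nat \<Rightarrow> real) \<Rightarrow> nat \<Rightarrow> real" where
  "payoff_d M N d0 k0 U thd ths i =
     U i (demand_alloc M N d0 k0 thd ths i) - price M N d0 k0 thd ths * d0 - thd i"

definition payoff_s :: "nat \<Rightarrow> nat \<Rightarrow> real \<Rightarrow> real \<Rightarrow> (nat \<Rightarrow> real \<Rightarrow> real)
    \<Rightarrow> (nat \<Rightarrow> real) \<Rightarrow> (nat \<Rightarrow> real) \<Rightarrow> nat \<Rightarrow> real" where
  "payoff_s M N d0 k0 C thd ths i =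
     price M N d0 k0 thd ths * k0 - ths i - C i (supply_alloc M N d0 k0 thd ths i)"

definition is_nash :: "nat \<Rightarrow> nat \<Rightarrow> real \<Rightarrow> real \<Rightarrow> (nat \<Rightarrow> real \<Rightarrow> real) \<Rightarrow> (nat \<Rightarrow> real \<Rightarrow> real)
    \<Rightarrow> (nat \<Rightarrow> real) \<Rightarrow> (nat \<Rightarrow> real) \<Rightarrow> bool" where
  "is_nash M N d0 k0 U C thd ths \<longleftrightarrow>
     (\<forall>i\<in>{1..M}. thd i \<ge> 0) \<and> (\<forall>i\<in>{1..N}. ths i \<ge> 0) \<and>
     (\<forall>i\<in>{1..M}. \<forall>t\<ge>0. payoff_d M N d0 k0 U (thd(i := t)) ths i \<le> payoff_d M N d0 k0 U thd ths i) \<and>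
     (\<forall>i\<in>{1..N}. \<forall>t\<ge>0. payoff_s M N d0 k0 C thd (ths(i := t)) i \<le> payoff_s M N d0 k0 C thd ths i)"

definition U_tilde :: "nat \<Rightarrow> nat \<Rightarrow> real \<Rightarrow> real \<Rightarrow> (real \<Rightarrow> real) \<Rightarrow> real \<Rightarrow> real" where
  "U_tilde M N d0 k0 u x =
     (1 - x / (real N * k0 - (real M - 1) * d0)) * u x
     + (1 / (real N * k0 - (real M - 1) * d0)) * integral {d0..x} u"

definition C_tilde :: "nat \<Rightarrow> nat \<Rightarrow> real \<Rightarrow> real \<Rightarrow> (real \<Rightarrow> real) \<Rightarrow> real \<Rightarrow> real" where
  "C_tilde M N d0 k0 c x =
     (1 + x / ((real N - 1) * k0 - real M * d0)) * c x
     - (1 / ((real N - 1) * k0 - real M * d0)) * integral {0..x} c"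

definition feasible :: "nat \<Rightarrow> nat \<Rightarrow> real \<Rightarrow> real \<Rightarrow> (nat \<Rightarrow> real) \<Rightarrow> (nat \<Rightarrow> real) \<Rightarrow> bool" where
  "feasible M N d0 k0 d s \<longleftrightarrow>
     (\<Sum>i\<in>{1..M}. d i) = (\<Sum>i\<in>{1..N}. s i) \<and>
     (\<forall>i\<in>{1..N}. 0 \<le> s i \<and> s i \<le> k0) \<and> (\<forall>i\<in>{1..M}. d i \<ge> d0)"

definition welfare :: "nat \<Rightarrow> nat \<Rightarrow> real \<Rightarrow> real \<Rightarrow> (nat \<Rightarrow> real \<Rightarrow> real) \<Rightarrow> (nat \<Rightarrow> real \<Rightarrow> real)
    \<Rightarrow> (nat \<Rightarrow> real) \<Rightarrow> (nat \<Rightarrow> real) \<Rightarrow> real" where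
  "welfare M N d0 k0 U C d s =
     (\<Sum>i\<in>{1..M}. U_tilde M N d0 k0 (U i) (d i)) - (\<Sum>i\<in>{1..N}. C_tilde M N d0 k0 (C i) (s i))"

definition unique_optimum :: "nat \<Rightarrow> nat \<Rightarrow> real \<Rightarrow> real \<Rightarrow> (nat \<Rightarrow> real \<Rightarrow> real) \<Rightarrow> (nat \<Rightarrow> real \<Rightarrow> real)
    \<Rightarrow> (nat \<Rightarrow> real) \<Rightarrow> (nat \<Rightarrow> real) \<Rightarrow> bool" where
  "unique_optimum M N d0 k0 U C d s \<longleftrightarrow>
     feasible M N d0 k0 d s \<and>
     (\<forall>d' s'. feasible M N d0 k0 d' s' \<longrightarrow> welfare M N d0 k0 U C d' s' \<le> welfare M N d0 k0 U C d s) \<and>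
     (\<forall>d' s'. feasible M N d0 k0 d' s' \<and> welfare M N d0 k0 U C d' s' = welfare M N d0 k0 U C d s
        \<longrightarrow> (\<forall>i\<in>{1..M}. d' i = d i) \<and> (\<forall>i\<in>{1..N}. s' i = s i))"

end

theory Submission imports Defs begin

(* With K = N k0 - M d0 the price is the total bid divided by K, and a player bidding t
   against the others' total B receives the quantity t K / (B + t) at price (B + t) / K.
   Measure every player by this quantity y = bid / price: the consumer's purchase beyond d0
   or the capacity a supplier withholds. The first-order condition of a player's best
   response then says that y satisfies the KKT conditions, with the price as multiplier,
   of maximising U_tilde (d0 + y) resp. - C_tilde (k0 - y) minus p y: the correction terms
   in U_tilde and C_tilde are exactly the price impact of the bid. By concavity these
   conditions are also sufficient, so Nash equilibria are the same as market-clearing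
   prices of this price-taking economy with quantities summing to K. The KKT quantities
   are continuous and decreasing in the price, which gives existence (intermediate value
   theorem) and uniqueness of the clearing price, and the usual Lagrangian argument shows
   that the clearing allocation is the unique optimum of the strictly concave program. *)

section \<open>Tangents and one-sided maxima\<close>

lemma concave_on_imp_below_tangent:
  fixes f :: "real \<Rightarrow> real"
  assumes conc: "concave_on {a..} f" and c: "a \<le> c" and x: "a \<le> x"
    and der: "(f has_real_derivative f') (at c within {a..})"
  shows "f x \<le> f c + f' * (x - c)"
proof (cases "a < c")
  case True
  have "- f x - (- f c) \<ge> (- f') * (x - c)"
  proof (rule convex_on_imp_above_tangent)
    show "convex_on {a..} (\<lambda>x. - f x)" using conc by (simp add: concave_on_def)
    show "((\<lambda>x. - f x) has_real_derivative - f') (at c within {a..})"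
      using der by (intro derivative_intros)
  qed (use True x in \<open>auto simp: is_interval_connected\<close>)
  then show ?thesis by (simp add: algebra_simps)
next
  case False
  with c have ca: "c = a" by simp
  show ?thesis
  proof (cases "x = a")
    case False
    with x have xa: "a < x" by simp
    \<comment> \<open>at the boundary point the chords from \<open>a\<close> dominate the chord to \<open>x\<close> and converge to \<open>f'\<close>\<close>
    have "(f has_real_derivative f') (at a within {a<..<x})"
      using der ca by (auto intro: has_field_derivative_subset)
    then have lim: "((\<lambda>y. (f y - f a) / (y - a)) \<longlongrightarrow> f') (at a within {a<..<x})"
      unfolding has_field_derivative_iff .
    have "\<forall>\<^sub>F y in at a within {a<..<x}. (f x - f a) / (x - a) \<le> (f y - f a) / (y - a)"
      unfolding eventually_at_filter
    proof (rule always_eventually, intro allI impI)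
      fix y assume "y \<noteq> a" and y: "y \<in> {a<..<x}"
      have "concave_on {a..x} f"
        using conc unfolding concave_on_def by (rule convex_on_subset) auto
      then have "f y \<ge> (f x - f a) / (x - a) * (y - a) + f a"
        using concave_onD_Icc'[of a x f y] y by auto
      then show "(f x - f a) / (x - a) \<le> (f y - f a) / (y - a)"
        using y by (simp add: field_simps)
    qed
    moreover have "at a within {a<..<x} \<noteq> bot"
      using xa by (subst at_within_eq_bot_iff) auto
    ultimately have "(f x - f a) / (x - a) \<le> f'"
      using tendsto_lowerbound[OF lim] by blast
    then show ?thesis using xa ca by (simp add: field_simps)
  qed (use ca in simp)
qed

lemma has_real_derivative_at_max_on_nonneg:
  fixes g :: "real \<Rightarrow> real"
  assumes der: "(g has_real_derivative g') (at x within {0..})" and x: "0 \<le> x"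
    and max: "\<And>t. 0 < t \<Longrightarrow> g t \<le> g x"
  shows "g' \<le> 0" and "0 < x \<Longrightarrow> g' = 0"
proof -
  show le: "g' \<le> 0"
  proof (rule ccontr)
    assume "\<not> g' \<le> 0"
    then obtain d where "d > 0"
      and "\<And>h. h > 0 \<Longrightarrow> x + h \<in> {0..} \<Longrightarrow> h < d \<Longrightarrow> g x < g (x + h)"
      using has_real_derivative_pos_inc_right[OF der] by force
    then have "g x < g (x + d / 2)" using x by auto
    moreover have "g (x + d / 2) \<le> g x" using max \<open>d > 0\<close> x by auto
    ultimately show False by simp
  qed
  assume x_pos: "0 < x"
  show "g' = 0"
  proof (rule ccontr)
    assume "g' \<noteq> 0"
    with le obtain d where "d > 0"
      and dec: "\<And>h. h > 0 \<Longrightarrow> x - h \<in> {0..} \<Longrightarrow> h < d \<Longrightarrow> g x < g (x - h)"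
      using has_real_derivative_neg_dec_left[OF der] by force
    define e where "e = min d x / 2"
    have "e > 0" "e < d" "x - e > 0" using \<open>d > 0\<close> x_pos by (auto simp: e_def)
    then have "g x < g (x - e)" using dec by auto
    moreover have "g (x - e) \<le> g x" using max \<open>x - e > 0\<close> by blast
    ultimately show False by simp
  qed
qed

lemma strictly_below_tangent_if_deriv_decreasing:
  fixes F f :: "real \<Rightarrow> real"
  assumes der: "\<And>x. x \<in> {a..b} \<Longrightarrow> (F has_real_derivative f x) (at x within {a..b})"
    and dec: "\<And>x y. x \<in> {a..b} \<Longrightarrow> y \<in> {a..b} \<Longrightarrow> x < y \<Longrightarrow> f y < f x"
    and x: "x \<in> {a..b}" and y: "y \<in> {a..b}" and "x \<noteq> y"
  shows "F x < F y + f y * (x - y)"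
proof -
  have mvt: "\<exists>z. u < z \<and> z < v \<and> F v - F u = (v - u) * f z"
    if uv: "u \<in> {a..b}" "v \<in> {a..b}" "u < v" for u v
  proof -
    have deriv_at: "(F has_real_derivative f z) (at z)" if "u < z" "z < v" for z
      using der[of z] that uv at_within_interior[of z "{a..b}"] by auto
    have "continuous_on {u..v} F"
      using DERIV_continuous_on[OF der] by (rule continuous_on_subset) (use uv in auto)
    then obtain l z where "u < z" "z < v" "DERIV F z :> l" "F v - F u = (v - u) * l"
      using MVT[OF uv(3)] deriv_at real_differentiable_def by meson
    then show ?thesis using DERIV_unique deriv_at by metis
  qed
  show ?thesis
  proof (cases "y < x")
    case True
    then obtain z where "y < z" "z < x" "F x - F y = (x - y) * f z" using mvt[OF y x] by blast
    moreover have "(x - y) * f z < (x - y) * f y" using dec[of y z] calculation True x y by auto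
    ultimately show ?thesis by (simp add: algebra_simps)
  next
    case False
    with \<open>x \<noteq> y\<close> have "x < y" by simp
    then obtain z where "x < z" "z < y" "F y - F x = (y - x) * f z" using mvt[OF x y] by blast
    moreover have "(y - x) * f y < (y - x) * f z" using dec[of z y] calculation \<open>x < y\<close> x y by auto
    ultimately show ?thesis by (simp add: algebra_simps)
  qed
qed

lemma sum_fun_upd:
  fixes f :: "'a \<Rightarrow> 'b::ab_group_add"
  assumes "finite A" "i \<in> A"
  shows "sum (f(i := t)) A = sum f A - f i + t"
  using sum.remove[OF assms, of "f(i := t)"] sum.remove[OF assms, of f]
  by (simp add: sum.cong[OF refl, of "A - {i}" "f(i := t)" f])

section \<open>Bidding against a fixed total\<close>

text \<open>The payoff of a player who bids \<open>t\<close> while the others bid \<open>B\<close> in total, up to the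
  additive constant \<open>B\<close>: at price \<open>(B + t) / K\<close> the player gets the quantity \<open>t * K / (B + t)\<close>,
  valued by \<open>W\<close>, and the payment nets out to \<open>L\<close> times the price.\<close>
definition bid_value :: "(real \<Rightarrow> real) \<Rightarrow> real \<Rightarrow> real \<Rightarrow> real \<Rightarrow> real \<Rightarrow> real" where
  "bid_value W K L B t = W (t * K / (B + t)) - L * (B + t) / K"

lemma bid_value_le_of_kkt:
  fixes W :: "real \<Rightarrow> real"
  assumes K: "0 < K" and L: "0 < L" and B: "0 < B" and \<theta>: "0 \<le> \<theta>" and t: "0 \<le> t"
    and p: "p = (B + \<theta>) / K" and y: "y = \<theta> / p"
    and tangent: "\<And>z. 0 \<le> z \<Longrightarrow> W z \<le> W y + w * (z - y)"
    and below: "w * (K - y) / L \<le> p" and equal: "0 < y \<Longrightarrow> w * (K - y) / L = p"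
  shows "bid_value W K L B t \<le> bid_value W K L B \<theta>"
proof -
  define z where "z = t * K / (B + t)"
  have "B + t \<noteq> 0" using B t by simp
  have y_eq: "y = \<theta> * K / (B + \<theta>)" using p y by simp
  have "0 \<le> z" using B t K by (simp add: z_def)
  have "z - y = (K - y) * (t - \<theta>) / (B + t)"
    using B \<theta> t by (simp add: z_def y_eq field_simps)
  then have "w * (z - y) = w * (K - y) * ((t - \<theta>) / (B + t))" by simp
  also have "\<dots> \<le> p * L * ((t - \<theta>) / (B + t))"
  proof (cases "\<theta> \<le> t")
    case True
    then show ?thesis
      using below L B t by (intro mult_right_mono) (auto simp: pos_divide_le_eq)
  next
    case False
    then have "0 < y" using p B K \<theta> t by (simp add: y_eq)
    then show ?thesis using equal L by (simp add: field_simps)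
  qed
  also have "\<dots> = L * (t - \<theta>) / K - L * (t - \<theta>)\<^sup>2 / (K * (B + t))"
    unfolding p using \<open>B + t \<noteq> 0\<close> K
    by (simp add: divide_simps power2_eq_square) (simp add: algebra_simps)
  also have "\<dots> \<le> L * (t - \<theta>) / K"
    using L K B t by simp
  finally have "W z - W y \<le> L * (t - \<theta>) / K"
    using tangent[OF \<open>0 \<le> z\<close>] by linarith
  moreover have "L * (B + t) / K - L * (B + \<theta>) / K = L * (t - \<theta>) / K"
    by (simp add: diff_divide_distrib[symmetric] algebra_simps)
  ultimately show ?thesis
    unfolding bid_value_def z_def[symmetric] y_eq[symmetric] by linarith
qed

lemma kkt_of_bid_value_max:
  fixes W :: "real \<Rightarrow> real"
  assumes K: "0 < K" and L: "0 < L" and B: "0 \<le> B" and \<theta>: "0 \<le> \<theta>" and S: "0 < B + \<theta>"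
    and p: "p = (B + \<theta>) / K" and y: "y = \<theta> / p"
    and deriv: "(W has_real_derivative w) (at y within {0..})"
    and max: "\<And>t. 0 < t \<Longrightarrow> bid_value W K L B t \<le> bid_value W K L B \<theta>"
  shows "w * (K - y) / L \<le> p" and "0 < y \<Longrightarrow> w * (K - y) / L = p"
proof -
  define q where "q t = t * K / (B + t)" for t
  have y_eq: "y = q \<theta>" using p y by (simp add: q_def)
  have "(W has_real_derivative w) (at (q \<theta>) within q ` {0..})"
    using deriv B K by (auto simp: y_eq q_def intro: has_field_derivative_subset)
  moreover have "(q has_real_derivative K * B / (B + \<theta>)\<^sup>2) (at \<theta> within {0..})"
    unfolding q_def using S
    by (auto intro!: derivative_eq_intros simp: power2_eq_square algebra_simps)
  ultimately have "(W \<circ> q has_real_derivative w * (K * B / (B + \<theta>)\<^sup>2)) (at \<theta> within {0..})"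
    by (rule DERIV_image_chain)
  then have "(bid_value W K L B has_real_derivative w * (K * B / (B + \<theta>)\<^sup>2) - L / K)
      (at \<theta> within {0..})"
    unfolding bid_value_def[abs_def] q_def[symmetric] comp_def using K
    by (auto intro!: derivative_eq_intros)
  moreover have "w * (K * B / (B + \<theta>)\<^sup>2) - L / K = L / (B + \<theta>) * (w * (K - y) / L - p)"
    using S K L unfolding p y_eq q_def by (simp add: divide_simps power2_eq_square) (simp add: algebra_simps)
  ultimately have deriv_g: "(bid_value W K L B has_real_derivative L / (B + \<theta>) * (w * (K - y) / L - p))
      (at \<theta> within {0..})"
    by simp
  have pos: "0 < L / (B + \<theta>)" using L S by simp
  have "L / (B + \<theta>) * (w * (K - y) / L - p) \<le> 0"
    by (rule has_real_derivative_at_max_on_nonneg(1)[OF deriv_g \<theta> max])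
  then show "w * (K - y) / L \<le> p"
    using mult_pos_pos[OF pos, of "w * (K - y) / L - p"] by linarith
  assume "0 < y"
  then have "0 < \<theta>" using y p S K by (simp add: zero_less_divide_iff zero_less_mult_iff)
  then show "w * (K - y) / L = p"
    using has_real_derivative_at_max_on_nonneg(2)[OF deriv_g \<theta> max] L S by simp
qed

section \<open>Price-taking responses\<close>

text \<open>First-order conditions for maximising \<open>F y - p * y\<close> over \<open>0 \<le> y \<le> Y\<close>, where \<open>F' = f\<close> is
  decreasing and vanishes at \<open>Y\<close>.\<close>
definition kkt_point :: "(real \<Rightarrow> real) \<Rightarrow> real \<Rightarrow> real \<Rightarrow> real \<Rightarrow> bool" where
  "kkt_point f Y p y \<longleftrightarrow> 0 \<le> y \<and> y \<le> Y \<and> f y \<le> p \<and> (0 < y \<longrightarrow> f y = p)"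

definition response :: "(real \<Rightarrow> real) \<Rightarrow> real \<Rightarrow> real \<Rightarrow> real" where
  "response f Y p = the_inv_into {0..Y} f (min p (f 0))"

locale decreasing_marginal =
  fixes f :: "real \<Rightarrow> real" and Y :: real
  assumes Y_pos: "0 < Y"
    and continuous: "continuous_on {0..Y} f"
    and decreasing: "\<And>x y. 0 \<le> x \<Longrightarrow> x < y \<Longrightarrow> y \<le> Y \<Longrightarrow> f y < f x"
    and vanishes: "f Y = 0"
begin

lemma kkt_point_antimono:
  assumes "p \<le> q" "kkt_point f Y p y" "kkt_point f Y q z"
  shows "z \<le> y"
proof (rule ccontr)
  assume "\<not> z \<le> y"
  with assms have "f z = q" "f z < f y" "f y \<le> p"
    using decreasing[of y z] by (auto simp: kkt_point_def)
  with \<open>p \<le> q\<close> show False by simp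
qed

lemma kkt_point_unique:
  assumes "kkt_point f Y p y" "kkt_point f Y p z"
  shows "y = z"
  using kkt_point_antimono[OF order.refl assms] kkt_point_antimono[OF order.refl assms(2,1)]
  by simp

lemma kkt_point_two_prices:
  assumes "p < q" "kkt_point f Y p y" "kkt_point f Y q y"
  shows "y = 0"
proof (rule ccontr)
  assume "y \<noteq> 0"
  with assms(2,3) have "f y = p" "f y = q" by (auto simp: kkt_point_def)
  with \<open>p < q\<close> show False by simp
qed

lemma kkt_point_strict_max:
  assumes deriv: "\<And>x. x \<in> {0..Y} \<Longrightarrow> (F has_real_derivative f x) (at x within {0..Y})"
    and kkt: "kkt_point f Y p y" and z: "z \<in> {0..Y}" "z \<noteq> y"
  shows "F z - p * z < F y - p * y"
proof -
  have "F z < F y + f y * (z - y)"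
    using kkt z by (intro strictly_below_tangent_if_deriv_decreasing[OF deriv])
      (auto simp: kkt_point_def intro: decreasing)
  moreover have "f y * (z - y) \<le> p * (z - y)"
    using kkt z by (cases "0 < y") (auto simp: kkt_point_def intro: mult_right_mono)
  ultimately show ?thesis by (simp add: algebra_simps)
qed

lemma inj_on_marginal: "inj_on f {0..Y}"
proof (rule inj_onI)
  fix x z assume "x \<in> {0..Y}" "z \<in> {0..Y}" "f x = f z"
  then show "x = z"
    using decreasing[of x z] decreasing[of z x] by (cases x z rule: linorder_cases) auto
qed

lemma marginal_image: "f ` {0..Y} = {0..f 0}"
proof
  have "f Y \<le> f x \<and> f x \<le> f 0" if "x \<in> {0..Y}" for x
    using that decreasing[of 0 x] decreasing[of x Y] by (cases "x = 0"; cases "x = Y") auto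
  then show "f ` {0..Y} \<subseteq> {0..f 0}" using vanishes by auto
  show "{0..f 0} \<subseteq> f ` {0..Y}"
  proof
    fix q assume "q \<in> {0..f 0}"
    then obtain x where "0 \<le> x" "x \<le> Y" "f x = q"
      using IVT2'[of f Y q 0] continuous vanishes Y_pos by auto
    then show "q \<in> f ` {0..Y}" by auto
  qed
qed

lemma marginal_0_pos: "0 < f 0"
  using decreasing[of 0 Y] Y_pos vanishes by simp

lemma kkt_point_response: "0 \<le> p \<Longrightarrow> kkt_point f Y p (response f Y p)"
proof -
  assume "0 \<le> p"
  define q where "q = min p (f 0)"
  have "q \<in> f ` {0..Y}" using \<open>0 \<le> p\<close> marginal_image marginal_0_pos by (auto simp: q_def)
  then have r: "response f Y p \<in> {0..Y}" and fr: "f (response f Y p) = q"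
    unfolding response_def q_def[symmetric]
    by (auto intro: the_inv_into_into[OF inj_on_marginal] f_the_inv_into_f[OF inj_on_marginal]
        simp del: atLeastAtMost_iff)
  show ?thesis
  proof (cases "p \<le> f 0")
    case True
    then show ?thesis using r fr by (simp add: kkt_point_def q_def)
  next
    case False
    then have "response f Y p = 0"
      using inj_onD[OF inj_on_marginal _ r, of 0] fr Y_pos by (simp add: q_def)
    then show ?thesis using False Y_pos by (simp add: kkt_point_def)
  qed
qed

lemma continuous_on_response: "continuous_on {0..} (response f Y)"
proof -
  have "continuous_on (f ` {0..Y}) (the_inv_into {0..Y} f)"
    by (rule continuous_on_inv[OF continuous compact_Icc])
       (use the_inv_into_f_f[OF inj_on_marginal] in auto)
  moreover have "continuous_on {0..} (\<lambda>p. min p (f 0))"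
    by (intro continuous_intros)
  moreover have "(\<lambda>p. min p (f 0)) ` {0..} \<subseteq> f ` {0..Y}"
    unfolding marginal_image using marginal_0_pos by auto
  ultimately show ?thesis unfolding response_def[abs_def]
    by (rule continuous_on_compose2)
qed

lemma response_0: "response f Y 0 = Y"
proof -
  have "kkt_point f Y 0 Y" using vanishes Y_pos by (simp add: kkt_point_def)
  then show ?thesis by (rule kkt_point_unique[OF kkt_point_response[OF order.refl]])
qed

lemma response_eq_0:
  assumes "f 0 \<le> p"
  shows "response f Y p = 0"
proof -
  have "0 \<le> p" using assms marginal_0_pos by simp
  moreover have "kkt_point f Y p 0" using assms Y_pos by (simp add: kkt_point_def)
  ultimately show ?thesis by (rule kkt_point_unique[OF kkt_point_response])
qed

end

locale market =
  fixes M N :: nat and d0 k0 :: real and U C U' C' :: "nat \<Rightarrow> real \<Rightarrow> real"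
  assumes M_pos: "1 \<le> M" and d0_pos: "0 < d0" and k0_pos: "0 < k0"
    and U_concave: "\<And>i. i \<in> {1..M} \<Longrightarrow> concave_on {d0..} (U i)"
    and U_strict_mono: "\<And>i. i \<in> {1..M} \<Longrightarrow> strict_mono_on {d0..} (U i)"
    and U_deriv: "\<And>i x. i \<in> {1..M} \<Longrightarrow> d0 \<le> x \<Longrightarrow> (U i has_real_derivative U' i x) (at x within {d0..})"
    and U'_continuous: "\<And>i. i \<in> {1..M} \<Longrightarrow> continuous_on {d0..} (U' i)"
    and C_convex: "\<And>j. j \<in> {1..N} \<Longrightarrow> convex_on UNIV (C j)"
    and C_strict_mono: "\<And>j. j \<in> {1..N} \<Longrightarrow> strict_mono_on {0..} (C j)"
    and C_deriv: "\<And>j x. j \<in> {1..N} \<Longrightarrow> (C j has_real_derivative C' j x) (at x)"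
    and C'_continuous: "\<And>j. j \<in> {1..N} \<Longrightarrow> continuous_on UNIV (C' j)"
    and C_nonneg: "\<And>j x. j \<in> {1..N} \<Longrightarrow> 0 \<le> x \<Longrightarrow> 0 \<le> C j x"
    and C_zero: "\<And>j x. j \<in> {1..N} \<Longrightarrow> x \<le> 0 \<Longrightarrow> C j x = 0"
    and no_pivot: "real M * d0 < (real N - 1) * k0"
begin

text \<open>The price is the total bid divided by \<open>K\<close>; \<open>D\<close> and \<open>E\<close> are the denominators
  \<open>N k0 - (M - 1) d0\<close> and \<open>(N - 1) k0 - M d0\<close> in \<^const>\<open>U_tilde\<close> and \<^const>\<open>C_tilde\<close>.\<close>
definition K :: real where "K = real N * k0 - real M * d0"
definition D :: real where "D = K + d0"
definition E :: real where "E = K - k0"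

lemma E_pos: "0 < E"
  using no_pivot by (simp add: E_def K_def algebra_simps)

lemma K_pos: "0 < K"
  using E_pos k0_pos by (simp add: E_def)

lemma D_pos: "0 < D"
  using K_pos d0_pos by (simp add: D_def)

lemma N_pos: "1 \<le> N"
proof -
  have "0 < (real N - 1) * k0" using no_pivot M_pos d0_pos by (smt (verit) of_nat_0_le_iff mult_nonneg_nonneg)
  then show ?thesis using k0_pos by (simp add: zero_less_mult_iff)
qed

lemma U_below_tangent:
  "i \<in> {1..M} \<Longrightarrow> d0 \<le> x \<Longrightarrow> d0 \<le> z \<Longrightarrow> U i z \<le> U i x + U' i x * (z - x)"
  by (rule concave_on_imp_below_tangent[OF U_concave _ _ U_deriv])

lemma U'_pos:
  assumes i: "i \<in> {1..M}" and x: "d0 \<le> x"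
  shows "0 < U' i x"
proof -
  have "U i x < U i (x + 1)"
    using x by (intro strict_mono_onD[OF U_strict_mono[OF i]]) auto
  then show ?thesis using U_below_tangent[OF i x, of "x + 1"] x by simp
qed

lemma U'_antimono:
  assumes i: "i \<in> {1..M}" and x: "d0 \<le> x" and xz: "x \<le> z"
  shows "U' i z \<le> U' i x"
proof -
  have "0 \<le> (U' i x - U' i z) * (z - x)"
    using U_below_tangent[OF i x, of z] U_below_tangent[OF i _ x, of z] x xz
    by (simp add: algebra_simps)
  then show ?thesis using xz by (cases "x = z") (auto simp: zero_le_mult_iff)
qed

lemma C_above_tangent: "j \<in> {1..N} \<Longrightarrow> C j x + C' j x * (z - x) \<le> C j z"
  using convex_on_imp_above_tangent[OF C_convex, of j x z "C' j x"] C_deriv[of j x]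
  by (auto simp: has_field_derivative_at_within)

lemma C'_zero:
  assumes j: "j \<in> {1..N}" and x: "x \<le> 0"
  shows "C' j x = 0"
proof -
  have "C j x \<le> C j z" for z using C_zero[OF j x] C_nonneg[OF j, of z] C_zero[OF j, of z] by force
  then show ?thesis by (intro DERIV_local_min[OF C_deriv[OF j], of 1]) auto
qed

lemma C'_pos:
  assumes j: "j \<in> {1..N}" and x: "0 < x"
  shows "0 < C' j x"
proof -
  have "C j 0 < C j x" using x by (intro strict_mono_onD[OF C_strict_mono[OF j]]) auto
  then have "0 < x * C' j x" using C_above_tangent[OF j, of x 0] by (simp add: algebra_simps)
  then show ?thesis using x by (simp add: zero_less_mult_iff)
qed

lemma C'_mono:
  assumes j: "j \<in> {1..N}" and "x \<le> z"
  shows "C' j x \<le> C' j z"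
proof -
  have "0 \<le> (C' j z - C' j x) * (z - x)"
    using C_above_tangent[OF j, of x z] C_above_tangent[OF j, of z x] by (simp add: algebra_simps)
  then show ?thesis using \<open>x \<le> z\<close> by (cases "x = z") (auto simp: zero_le_mult_iff)
qed

text \<open>Marginal values, net of price impact, of buying \<open>y\<close> beyond \<open>d0\<close> and of withholding \<open>y\<close> of
  the capacity \<open>k0\<close>; they are the derivatives of \<open>U_tilde (d0 + y)\<close> and \<open>- C_tilde (k0 - y)\<close>.\<close>
definition consumer_marginal :: "nat \<Rightarrow> real \<Rightarrow> real" where
  "consumer_marginal i y = U' i (d0 + y) * (K - y) / D"

definition supplier_marginal :: "nat \<Rightarrow> real \<Rightarrow> real" where
  "supplier_marginal j y = C' j (k0 - y) * (K - y) / E"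

lemma decreasing_marginal_consumer:
  assumes i: "i \<in> {1..M}"
  shows "decreasing_marginal (consumer_marginal i) K"
proof
  show "0 < K" by (rule K_pos)
  have "continuous_on {0..K} (\<lambda>y. U' i (d0 + y))"
    by (rule continuous_on_compose2[OF U'_continuous[OF i]]) (intro continuous_intros, auto)
  then show "continuous_on {0..K} (consumer_marginal i)"
    unfolding consumer_marginal_def[abs_def] by (intro continuous_intros) (use D_pos in auto)
  show "consumer_marginal i K = 0" by (simp add: consumer_marginal_def)
  fix x y assume "0 \<le> x" "x < y" "y \<le> K"
  then have "U' i (d0 + y) * (K - y) < U' i (d0 + y) * (K - x)"
    using U'_pos[OF i, of "d0 + y"] by simp
  also have "\<dots> \<le> U' i (d0 + x) * (K - x)"
    using U'_antimono[OF i, of "d0 + x" "d0 + y"] \<open>0 \<le> x\<close> \<open>x < y\<close> \<open>y \<le> K\<close>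
    by (intro mult_right_mono) auto
  finally show "consumer_marginal i y < consumer_marginal i x"
    unfolding consumer_marginal_def using D_pos by (simp add: divide_strict_right_mono)
qed

lemma decreasing_marginal_supplier:
  assumes j: "j \<in> {1..N}"
  shows "decreasing_marginal (supplier_marginal j) k0"
proof
  show "0 < k0" by (rule k0_pos)
  have "continuous_on {0..k0} (\<lambda>y. C' j (k0 - y))"
    by (rule continuous_on_compose2[OF C'_continuous[OF j]]) (intro continuous_intros, auto)
  then show "continuous_on {0..k0} (supplier_marginal j)"
    unfolding supplier_marginal_def[abs_def] by (intro continuous_intros) (use E_pos in auto)
  show "supplier_marginal j k0 = 0" by (simp add: supplier_marginal_def C'_zero[OF j])
  fix x y assume "0 \<le> x" "x < y" "y \<le> k0"
  then have "C' j (k0 - y) * (K - y) \<le> C' j (k0 - x) * (K - y)"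
    using C'_mono[OF j, of "k0 - y" "k0 - x"] E_pos by (intro mult_right_mono) (auto simp: E_def)
  also have "\<dots> < C' j (k0 - x) * (K - x)"
    using C'_pos[OF j, of "k0 - x"] \<open>x < y\<close> \<open>y \<le> k0\<close> by simp
  finally show "supplier_marginal j y < supplier_marginal j x"
    unfolding supplier_marginal_def using E_pos by (simp add: divide_strict_right_mono)
qed

lemma U_tilde_deriv:
  assumes i: "i \<in> {1..M}" and y: "y \<in> {0..K}"
  shows "((\<lambda>y. U_tilde M N d0 k0 (U i) (d0 + y)) has_real_derivative consumer_marginal i y)
    (at y within {0..K})"
proof -
  have deriv_D: "(U i has_real_derivative U' i x) (at x within {d0..D})" if "x \<in> {d0..D}" for x
    using that by (auto intro: has_field_derivative_subset[OF U_deriv[OF i]])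
  have tilde: "U_tilde M N d0 k0 (U i) = (\<lambda>x. (1 - x / D) * U i x + integral {d0..x} (U i) / D)"
    by (rule ext) (simp add: U_tilde_def D_def K_def algebra_simps)
  have "((\<lambda>x. (1 - x / D) * U i x + integral {d0..x} (U i) / D) has_real_derivative
      U' i x * (1 - x / D)) (at x within {d0..D})" if x: "x \<in> {d0..D}" for x
    using deriv_D[OF x] integral_has_real_derivative[OF DERIV_continuous_on[OF deriv_D] x] D_pos
    by (auto intro!: derivative_eq_intros simp: field_simps)
  moreover have "consumer_marginal i y = U' i (d0 + y) * (1 - (d0 + y) / D)"
    using D_pos by (simp add: consumer_marginal_def D_def field_simps)
  moreover have "(\<lambda>y. d0 + y) ` {0..K} = {d0..D}"
    by (simp add: D_def add.commute)
  ultimately have "(U_tilde M N d0 k0 (U i) has_real_derivative consumer_marginal i y)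
      (at (d0 + y) within (\<lambda>y. d0 + y) ` {0..K})"
    using y by (simp add: tilde)
  moreover have "((\<lambda>y. d0 + y) has_real_derivative 1) (at y within {0..K})"
    by (auto intro!: derivative_eq_intros)
  ultimately show ?thesis
    using DERIV_image_chain[unfolded comp_def] by fastforce
qed

lemma C_tilde_deriv:
  assumes j: "j \<in> {1..N}" and y: "y \<in> {0..k0}"
  shows "((\<lambda>y. - C_tilde M N d0 k0 (C j) (k0 - y)) has_real_derivative supplier_marginal j y)
    (at y within {0..k0})"
proof -
  have deriv: "(C j has_real_derivative C' j x) (at x within {0..k0})" for x
    by (rule has_field_derivative_at_within[OF C_deriv[OF j]])
  have tilde: "C_tilde M N d0 k0 (C j) = (\<lambda>x. (1 + x / E) * C j x - integral {0..x} (C j) / E)"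
    by (rule ext) (simp add: C_tilde_def E_def K_def algebra_simps)
  have "((\<lambda>x. (1 + x / E) * C j x - integral {0..x} (C j) / E) has_real_derivative
      C' j x * (1 + x / E)) (at x within {0..k0})" if x: "x \<in> {0..k0}" for x
    using deriv[of x] integral_has_real_derivative[OF DERIV_continuous_on[OF deriv] x] E_pos
    by (auto intro!: derivative_eq_intros simp: field_simps)
  moreover have "(\<lambda>y. k0 - y) ` {0..k0} = {0..k0}"
    by simp
  ultimately have "(C_tilde M N d0 k0 (C j) has_real_derivative C' j (k0 - y) * (1 + (k0 - y) / E))
      (at (k0 - y) within (\<lambda>y. k0 - y) ` {0..k0})"
    using y by (simp add: tilde)
  moreover have "((\<lambda>y. k0 - y) has_real_derivative -1) (at y within {0..k0})"
    by (auto intro!: derivative_eq_intros)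
  ultimately have "((\<lambda>y. C_tilde M N d0 k0 (C j) (k0 - y)) has_real_derivative
      C' j (k0 - y) * (1 + (k0 - y) / E) * -1) (at y within {0..k0})"
    by (rule DERIV_image_chain[unfolded comp_def])
  moreover have "C' j (k0 - y) * (1 + (k0 - y) / E) = supplier_marginal j y"
    using E_pos by (simp add: supplier_marginal_def E_def field_simps)
  ultimately show ?thesis
    using DERIV_minus by fastforce
qed

lemma payoff_d_deviation:
  assumes i: "i \<in> {1..M}" and B: "B = total_bid M N thd ths - thd i" and "B + t \<noteq> 0"
  shows "payoff_d M N d0 k0 U (thd(i := t)) ths i = bid_value (\<lambda>y. U i (d0 + y)) K D B t + B"
proof -
  have "total_bid M N (thd(i := t)) ths = B + t"
    unfolding total_bid_def sum_fun_upd[OF finite_atLeastAtMost i] using B by (simp add: total_bid_def)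
  then have "price M N d0 k0 (thd(i := t)) ths = (B + t) / K"
    using \<open>B + t \<noteq> 0\<close> by (simp add: price_def K_def)
  moreover have "- ((B + t) / K * d0) - t = - (D * (B + t) / K) + B"
    using K_pos by (simp add: D_def field_simps)
  ultimately show ?thesis using \<open>B + t \<noteq> 0\<close> \<open>total_bid M N (thd(i := t)) ths = B + t\<close>
    by (simp add: payoff_d_def demand_alloc_def bid_value_def)
qed

lemma payoff_s_deviation:
  assumes j: "j \<in> {1..N}" and B: "B = total_bid M N thd ths - ths j" and "B + t \<noteq> 0"
  shows "payoff_s M N d0 k0 C thd (ths(j := t)) j = bid_value (\<lambda>y. - C j (k0 - y)) K E B t + B"
proof -
  have "total_bid M N thd (ths(j := t)) = B + t"
    unfolding total_bid_def sum_fun_upd[OF finite_atLeastAtMost j] using B by (simp add: total_bid_def)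
  then have "price M N d0 k0 thd (ths(j := t)) = (B + t) / K"
    using \<open>B + t \<noteq> 0\<close> by (simp add: price_def K_def)
  moreover have "(B + t) / K * k0 - t = - (E * (B + t) / K) + B"
    using K_pos by (simp add: E_def field_simps)
  ultimately show ?thesis using \<open>B + t \<noteq> 0\<close> \<open>total_bid M N thd (ths(j := t)) = B + t\<close>
    by (simp add: payoff_s_def supply_alloc_def bid_value_def)
qed

text \<open>\<open>yd i = d i - d0\<close> is the quantity consumer \<open>i\<close> buys beyond \<open>d0\<close> and \<open>ys j = k0 - s j\<close>
  the capacity supplier \<open>j\<close> withholds; at a Nash equilibrium each is the player's bid divided
  by the price.\<close>
definition clearing :: "real \<Rightarrow> (nat \<Rightarrow> real) \<Rightarrow> (nat \<Rightarrow> real) \<Rightarrow> bool" where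
  "clearing p yd ys \<longleftrightarrow> 0 < p \<and>
     (\<forall>i\<in>{1..M}. kkt_point (consumer_marginal i) K p (yd i)) \<and>
     (\<forall>j\<in>{1..N}. kkt_point (supplier_marginal j) k0 p (ys j)) \<and>
     sum yd {1..M} + sum ys {1..N} = K"

lemma clearing_exists: "\<exists>p yd ys. clearing p yd ys"
proof -
  define yd where "yd p i = response (consumer_marginal i) K p" for p i
  define ys where "ys p j = response (supplier_marginal j) k0 p" for p j
  define excess where "excess p = sum (yd p) {1..M} + sum (ys p) {1..N} - K" for p
  define P where "P = (\<Sum>i\<in>{1..M}. consumer_marginal i 0) + (\<Sum>j\<in>{1..N}. supplier_marginal j 0)"
  note consumer = decreasing_marginal_consumer and supplier = decreasing_marginal_supplier
  have "continuous_on {0..} excess"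
    unfolding excess_def yd_def ys_def
    using decreasing_marginal.continuous_on_response[OF consumer]
      decreasing_marginal.continuous_on_response[OF supplier]
    by (intro continuous_intros) auto
  have "excess 0 = (real M - 1) * K + real N * k0"
    using decreasing_marginal.response_0[OF consumer] decreasing_marginal.response_0[OF supplier]
    by (simp add: excess_def yd_def ys_def algebra_simps)
  then have "0 < excess 0"
    using M_pos N_pos K_pos k0_pos by (simp add: add_nonneg_pos)
  have consumer_le_P: "consumer_marginal i 0 \<le> P" if "i \<in> {1..M}" for i
    using that decreasing_marginal.marginal_0_pos[OF consumer] decreasing_marginal.marginal_0_pos[OF supplier]
    unfolding P_def by (intro add_increasing2 member_le_sum sum_nonneg) (auto intro: less_imp_le)
  have supplier_le_P: "supplier_marginal j 0 \<le> P" if "j \<in> {1..N}" for j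
    using that decreasing_marginal.marginal_0_pos[OF consumer] decreasing_marginal.marginal_0_pos[OF supplier]
    unfolding P_def by (intro add_increasing member_le_sum sum_nonneg) (auto intro: less_imp_le)
  have "excess P = - K"
    using decreasing_marginal.response_eq_0[OF consumer consumer_le_P]
      decreasing_marginal.response_eq_0[OF supplier supplier_le_P]
    by (simp add: excess_def yd_def ys_def)
  have "0 \<le> P"
    using M_pos consumer_le_P[of 1] decreasing_marginal.marginal_0_pos[OF consumer, of 1] by simp
  then obtain p where p: "0 \<le> p" "p \<le> P" "excess p = 0"
    using IVT2'[of excess P 0 0] \<open>excess P = - K\<close> K_pos \<open>0 < excess 0\<close>
      continuous_on_subset[OF \<open>continuous_on {0..} excess\<close>, of "{0..P}"] by auto
  have "0 < p" using p \<open>0 < excess 0\<close> by (cases "p = 0") auto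
  then have "clearing p (yd p) (ys p)"
    using p decreasing_marginal.kkt_point_response[OF consumer] decreasing_marginal.kkt_point_response[OF supplier]
    by (simp add: clearing_def excess_def yd_def ys_def)
  then show ?thesis by blast
qed

lemma clearing_price_not_less:
  assumes c: "clearing p yd ys" and c': "clearing q zd zs" and "p < q"
  shows False
proof -
  note consumer = decreasing_marginal_consumer and supplier = decreasing_marginal_supplier
  have kkt: "kkt_point (consumer_marginal i) K p (yd i)" "kkt_point (consumer_marginal i) K q (zd i)"
    if "i \<in> {1..M}" for i
    using c c' that by (auto simp: clearing_def)
  have kkt': "kkt_point (supplier_marginal j) k0 p (ys j)" "kkt_point (supplier_marginal j) k0 q (zs j)"
    if "j \<in> {1..N}" for j
    using c c' that by (auto simp: clearing_def)
  have zd_le: "zd i \<le> yd i" if "i \<in> {1..M}" for i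
    using decreasing_marginal.kkt_point_antimono[OF consumer[OF that] _ kkt[OF that]] \<open>p < q\<close> by simp
  have zs_le: "zs j \<le> ys j" if "j \<in> {1..N}" for j
    using decreasing_marginal.kkt_point_antimono[OF supplier[OF that] _ kkt'[OF that]] \<open>p < q\<close> by simp
  have "sum zd {1..M} \<le> sum yd {1..M}" "sum zs {1..N} \<le> sum ys {1..N}"
    using zd_le zs_le by (auto intro: sum_mono)
  moreover have "sum yd {1..M} + sum ys {1..N} = sum zd {1..M} + sum zs {1..N}"
    using c c' by (simp add: clearing_def)
  ultimately have sum_d: "sum zd {1..M} = sum yd {1..M}" and sum_s: "sum zs {1..N} = sum ys {1..N}"
    by linarith+
  \<comment> \<open>so the quantities are optimal at two prices, which forces them to vanish\<close>
  have "yd i = 0" if "i \<in> {1..M}" for i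
    using decreasing_marginal.kkt_point_two_prices[OF consumer[OF that] \<open>p < q\<close> kkt(1)[OF that]]
      kkt(2)[OF that] sum_mono_inv[OF sum_d zd_le that] by simp
  moreover have "ys j = 0" if "j \<in> {1..N}" for j
    using decreasing_marginal.kkt_point_two_prices[OF supplier[OF that] \<open>p < q\<close> kkt'(1)[OF that]]
      kkt'(2)[OF that] sum_mono_inv[OF sum_s zs_le that] by simp
  ultimately have "sum yd {1..M} + sum ys {1..N} = 0" by simp
  with c K_pos show False by (simp add: clearing_def)
qed

lemma clearing_unique:
  assumes c: "clearing p yd ys" and c': "clearing q zd zs"
  shows "p = q" and "\<forall>i\<in>{1..M}. yd i = zd i" and "\<forall>j\<in>{1..N}. ys j = zs j"
proof -
  show "p = q"
    using clearing_price_not_less[OF c c'] clearing_price_not_less[OF c' c]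
    by (meson linorder_neqE_linordered_idom)
  show "\<forall>i\<in>{1..M}. yd i = zd i"
  proof
    fix i assume i: "i \<in> {1..M}"
    show "yd i = zd i"
      using c c' i \<open>p = q\<close>
      by (intro decreasing_marginal.kkt_point_unique[OF decreasing_marginal_consumer[OF i], of q])
        (auto simp: clearing_def)
  qed
  show "\<forall>j\<in>{1..N}. ys j = zs j"
  proof
    fix j assume j: "j \<in> {1..N}"
    show "ys j = zs j"
      using c c' j \<open>p = q\<close>
      by (intro decreasing_marginal.kkt_point_unique[OF decreasing_marginal_supplier[OF j], of q])
        (auto simp: clearing_def)
  qed
qed

lemma clearing_total_bid:
  assumes "clearing p yd ys"
  shows "total_bid M N (\<lambda>i. p * yd i) (\<lambda>j. p * ys j) = p * K"
  using assms by (simp add: total_bid_def clearing_def sum_distrib_left[symmetric] distrib_left[symmetric])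

lemma clearing_consumer_best_response:
  assumes c: "clearing p yd ys" and i: "i \<in> {1..M}" and "0 \<le> t"
    and thd: "thd = (\<lambda>i. p * yd i)" and ths: "ths = (\<lambda>j. p * ys j)"
  shows "payoff_d M N d0 k0 U (thd(i := t)) ths i \<le> payoff_d M N d0 k0 U thd ths i"
proof -
  define B where "B = total_bid M N thd ths - thd i"
  have "0 < p" and kkt: "kkt_point (consumer_marginal i) K p (yd i)"
    using c i by (auto simp: clearing_def)
  have "yd i \<noteq> K"
    using kkt \<open>0 < p\<close> K_pos by (auto simp: kkt_point_def consumer_marginal_def)
  then have "0 < B"
    using kkt \<open>0 < p\<close> clearing_total_bid[OF c]
    by (simp add: B_def thd ths kkt_point_def algebra_simps mult_less_cancel_left)
  have "bid_value (\<lambda>y. U i (d0 + y)) K D B t \<le> bid_value (\<lambda>y. U i (d0 + y)) K D B (thd i)"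
  proof (rule bid_value_le_of_kkt[where y = "yd i" and w = "U' i (d0 + yd i)"])
    show "p = (B + thd i) / K"
      using clearing_total_bid[OF c] K_pos by (simp add: B_def thd ths)
    show "yd i = thd i / p" using \<open>0 < p\<close> by (simp add: thd)
    show "U i (d0 + z) \<le> U i (d0 + yd i) + U' i (d0 + yd i) * (z - yd i)" if "0 \<le> z" for z
      using U_below_tangent[OF i, of "d0 + yd i" "d0 + z"] that kkt by (simp add: kkt_point_def)
  qed (use kkt K_pos D_pos \<open>0 < B\<close> \<open>0 < p\<close> \<open>0 \<le> t\<close> in
      \<open>auto simp: kkt_point_def consumer_marginal_def thd\<close>)
  moreover have "0 \<le> thd i" using kkt \<open>0 < p\<close> by (simp add: thd kkt_point_def)
  ultimately show ?thesis
    using payoff_d_deviation[OF i B_def, of t] payoff_d_deviation[OF i B_def, of "thd i"]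
      \<open>0 < B\<close> \<open>0 \<le> t\<close> by simp
qed

lemma clearing_supplier_best_response:
  assumes c: "clearing p yd ys" and j: "j \<in> {1..N}" and "0 \<le> t"
    and thd: "thd = (\<lambda>i. p * yd i)" and ths: "ths = (\<lambda>j. p * ys j)"
  shows "payoff_s M N d0 k0 C thd (ths(j := t)) j \<le> payoff_s M N d0 k0 C thd ths j"
proof -
  define B where "B = total_bid M N thd ths - ths j"
  have "0 < p" and kkt: "kkt_point (supplier_marginal j) k0 p (ys j)"
    using c j by (auto simp: clearing_def)
  have "0 < B"
    using kkt \<open>0 < p\<close> clearing_total_bid[OF c] E_pos
    by (simp add: B_def thd ths kkt_point_def E_def algebra_simps mult_less_cancel_left)
  have "bid_value (\<lambda>y. - C j (k0 - y)) K E B t \<le> bid_value (\<lambda>y. - C j (k0 - y)) K E B (ths j)"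
  proof (rule bid_value_le_of_kkt[where y = "ys j" and w = "C' j (k0 - ys j)"])
    show "p = (B + ths j) / K"
      using clearing_total_bid[OF c] K_pos by (simp add: B_def thd ths)
    show "ys j = ths j / p" using \<open>0 < p\<close> by (simp add: ths)
    show "- C j (k0 - z) \<le> - C j (k0 - ys j) + C' j (k0 - ys j) * (z - ys j)" for z
      using C_above_tangent[OF j, of "k0 - ys j" "k0 - z"] by (simp add: algebra_simps)
  qed (use kkt K_pos E_pos \<open>0 < B\<close> \<open>0 < p\<close> \<open>0 \<le> t\<close> in
      \<open>auto simp: kkt_point_def supplier_marginal_def ths\<close>)
  moreover have "0 \<le> ths j" using kkt \<open>0 < p\<close> by (simp add: ths kkt_point_def)
  ultimately show ?thesis
    using payoff_s_deviation[OF j B_def, of t] payoff_s_deviation[OF j B_def, of "ths j"]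
      \<open>0 < B\<close> \<open>0 \<le> t\<close> by simp
qed

lemma clearing_imp_nash:
  assumes c: "clearing p yd ys"
  shows "is_nash M N d0 k0 U C (\<lambda>i. p * yd i) (\<lambda>j. p * ys j)"
  using c clearing_consumer_best_response[OF c _ _ refl refl]
    clearing_supplier_best_response[OF c _ _ refl refl]
  by (auto simp: is_nash_def clearing_def kkt_point_def)

lemma nash_bids_le_total_bid:
  assumes n: "is_nash M N d0 k0 U C thd ths"
  shows "i \<in> {1..M} \<Longrightarrow> thd i \<le> total_bid M N thd ths"
    and "j \<in> {1..N} \<Longrightarrow> ths j \<le> total_bid M N thd ths"
proof -
  have "0 \<le> sum thd {1..M}" "0 \<le> sum ths {1..N}"
    using n by (auto simp: is_nash_def intro: sum_nonneg)
  moreover have "i \<in> {1..M} \<Longrightarrow> thd i \<le> sum thd {1..M}" "j \<in> {1..N} \<Longrightarrow> ths j \<le> sum ths {1..N}"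
    using n by (auto simp: is_nash_def intro!: member_le_sum)
  ultimately show "i \<in> {1..M} \<Longrightarrow> thd i \<le> total_bid M N thd ths"
    and "j \<in> {1..N} \<Longrightarrow> ths j \<le> total_bid M N thd ths"
    by (auto simp: total_bid_def)
qed

text \<open>If nobody bids, the price is zero and every supplier produces its whole capacity at a loss;
  a small bid instead lets a supplier produce nothing at an arbitrarily small net payment.\<close>
lemma nash_total_bid_pos:
  assumes n: "is_nash M N d0 k0 U C thd ths"
  shows "0 < total_bid M N thd ths"
proof (rule ccontr)
  have one: "1 \<in> {1..N}" using N_pos by simp
  assume "\<not> 0 < total_bid M N thd ths"
  moreover have "ths 1 \<le> total_bid M N thd ths" "0 \<le> ths 1"
    using nash_bids_le_total_bid(2)[OF n one] n one by (auto simp: is_nash_def)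
  ultimately have zero: "total_bid M N thd ths = 0" "ths 1 = 0" by linarith+
  define c where "c = C 1 k0"
  define t where "t = c * K / (2 * E)"
  have "C 1 0 < c" unfolding c_def using k0_pos by (intro strict_mono_onD[OF C_strict_mono[OF one]]) auto
  then have "0 < c" using C_zero[OF one, of 0] by simp
  then have "0 < t" using K_pos E_pos by (simp add: t_def)
  have "payoff_s M N d0 k0 C thd (ths(1 := t)) 1 = bid_value (\<lambda>y. - C 1 (k0 - y)) K E 0 t"
    using payoff_s_deviation[OF one, of 0 thd ths t] zero \<open>0 < t\<close> by simp
  also have "\<dots> = - C 1 (k0 - K) - c / 2"
    using \<open>0 < c\<close> K_pos E_pos by (simp add: bid_value_def t_def)
  also have "\<dots> = - c / 2"
    using C_zero[OF one, of "k0 - K"] E_pos by (simp add: E_def)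
  also have "\<dots> > payoff_s M N d0 k0 C thd ths 1"
    using zero \<open>0 < c\<close> by (simp add: payoff_s_def price_def supply_alloc_def c_def)
  finally have "payoff_s M N d0 k0 C thd ths 1 < payoff_s M N d0 k0 C thd (ths(1 := t)) 1" .
  moreover have "payoff_s M N d0 k0 C thd (ths(1 := t)) 1 \<le> payoff_s M N d0 k0 C thd ths 1"
    using n one \<open>0 < t\<close> by (simp add: is_nash_def)
  ultimately show False by simp
qed

lemma consumer_value_deriv:
  assumes i: "i \<in> {1..M}" and "0 \<le> y"
  shows "((\<lambda>y. U i (d0 + y)) has_real_derivative U' i (d0 + y)) (at y within {0..})"
proof -
  have "(U i has_real_derivative U' i (d0 + y)) (at (d0 + y) within (\<lambda>y. d0 + y) ` {0..})"
    by (rule has_field_derivative_subset[OF U_deriv[OF i]]) (use \<open>0 \<le> y\<close> in auto)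
  moreover have "((\<lambda>y. d0 + y) has_real_derivative 1) (at y within {0..})"
    by (auto intro!: derivative_eq_intros)
  ultimately show ?thesis
    using DERIV_image_chain[unfolded comp_def] by fastforce
qed

lemma nash_consumer_kkt:
  assumes n: "is_nash M N d0 k0 U C thd ths" and i: "i \<in> {1..M}"
  defines "p \<equiv> total_bid M N thd ths / K"
  shows "kkt_point (consumer_marginal i) K p (thd i / p)"
proof -
  define B where "B = total_bid M N thd ths - thd i"
  have "0 < total_bid M N thd ths" by (rule nash_total_bid_pos[OF n])
  then have "0 < p" "0 < B + thd i" "p = (B + thd i) / K"
    using K_pos by (simp_all add: p_def B_def)
  have "0 \<le> thd i" "0 \<le> B"
    using n i nash_bids_le_total_bid(1)[OF n i] by (auto simp: is_nash_def B_def)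
  have max: "bid_value (\<lambda>y. U i (d0 + y)) K D B t \<le> bid_value (\<lambda>y. U i (d0 + y)) K D B (thd i)"
    if "0 < t" for t
  proof -
    have "payoff_d M N d0 k0 U (thd(i := t)) ths i \<le> payoff_d M N d0 k0 U thd ths i"
      using n i that by (simp add: is_nash_def)
    then show ?thesis
      using payoff_d_deviation[OF i B_def, of t] payoff_d_deviation[OF i B_def, of "thd i"]
        \<open>0 \<le> B\<close> \<open>0 < B + thd i\<close> that by simp
  qed
  have "0 \<le> thd i / p" using \<open>0 \<le> thd i\<close> \<open>0 < p\<close> by simp
  moreover have "consumer_marginal i (thd i / p) \<le> p" "0 < thd i / p \<Longrightarrow> consumer_marginal i (thd i / p) = p"
    using kkt_of_bid_value_max[OF K_pos D_pos \<open>0 \<le> B\<close> \<open>0 \<le> thd i\<close> \<open>0 < B + thd i\<close>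
        \<open>p = (B + thd i) / K\<close> refl consumer_value_deriv[OF i \<open>0 \<le> thd i / p\<close>] max]
    by (simp_all add: consumer_marginal_def)
  moreover have "thd i / p \<le> K"
    using nash_bids_le_total_bid(1)[OF n i] \<open>0 < total_bid M N thd ths\<close> K_pos
    by (simp add: p_def pos_divide_le_eq mult_left_mono)
  ultimately show ?thesis unfolding kkt_point_def by blast
qed

lemma supplier_value_deriv:
  "j \<in> {1..N} \<Longrightarrow> ((\<lambda>y. - C j (k0 - y)) has_real_derivative C' j (k0 - y)) (at y within {0..})"
  by (auto intro!: derivative_eq_intros DERIV_chain'[of "\<lambda>y. k0 - y", OF _ C_deriv])

lemma nash_supplier_kkt:
  assumes n: "is_nash M N d0 k0 U C thd ths" and j: "j \<in> {1..N}"
  defines "p \<equiv> total_bid M N thd ths / K"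
  shows "kkt_point (supplier_marginal j) k0 p (ths j / p)"
proof -
  define B where "B = total_bid M N thd ths - ths j"
  have "0 < total_bid M N thd ths" by (rule nash_total_bid_pos[OF n])
  then have "0 < p" "0 < B + ths j" "p = (B + ths j) / K"
    using K_pos by (simp_all add: p_def B_def)
  have "0 \<le> ths j" "0 \<le> B"
    using n j nash_bids_le_total_bid(2)[OF n j] by (auto simp: is_nash_def B_def)
  have max: "bid_value (\<lambda>y. - C j (k0 - y)) K E B t \<le> bid_value (\<lambda>y. - C j (k0 - y)) K E B (ths j)"
    if "0 < t" for t
  proof -
    have "payoff_s M N d0 k0 C thd (ths(j := t)) j \<le> payoff_s M N d0 k0 C thd ths j"
      using n j that by (simp add: is_nash_def)
    then show ?thesis
      using payoff_s_deviation[OF j B_def, of t] payoff_s_deviation[OF j B_def, of "ths j"]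
        \<open>0 \<le> B\<close> \<open>0 < B + ths j\<close> that by simp
  qed
  have marg: "supplier_marginal j (ths j / p) \<le> p" "0 < ths j / p \<Longrightarrow> supplier_marginal j (ths j / p) = p"
    using kkt_of_bid_value_max[OF K_pos E_pos \<open>0 \<le> B\<close> \<open>0 \<le> ths j\<close> \<open>0 < B + ths j\<close>
        \<open>p = (B + ths j) / K\<close> refl supplier_value_deriv[OF j] max]
    by (simp_all add: supplier_marginal_def)
  \<comment> \<open>withholding more than the capacity has zero marginal value\<close>
  have "ths j / p \<le> k0"
  proof (rule ccontr)
    assume "\<not> ths j / p \<le> k0"
    then have "supplier_marginal j (ths j / p) = 0"
      using C'_zero[OF j, of "k0 - ths j / p"] by (simp add: supplier_marginal_def)
    with marg(2) \<open>\<not> ths j / p \<le> k0\<close> k0_pos \<open>0 < p\<close> show False by simp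
  qed
  moreover have "0 \<le> ths j / p" using \<open>0 \<le> ths j\<close> \<open>0 < p\<close> by simp
  ultimately show ?thesis using marg unfolding kkt_point_def by blast
qed

lemma nash_imp_clearing:
  assumes n: "is_nash M N d0 k0 U C thd ths"
  defines "p \<equiv> total_bid M N thd ths / K"
  shows "clearing p (\<lambda>i. thd i / p) (\<lambda>j. ths j / p)"
proof -
  have "0 < total_bid M N thd ths" by (rule nash_total_bid_pos[OF n])
  then have "0 < p" using K_pos by (simp add: p_def)
  have "(\<Sum>i\<in>{1..M}. thd i / p) + (\<Sum>j\<in>{1..N}. ths j / p) = total_bid M N thd ths / p"
    by (simp add: total_bid_def sum_divide_distrib add_divide_distrib)
  also have "\<dots> = K" using \<open>0 < total_bid M N thd ths\<close> K_pos by (simp add: p_def)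
  finally show ?thesis
    using \<open>0 < p\<close> nash_consumer_kkt[OF n] nash_supplier_kkt[OF n] by (simp add: clearing_def p_def)
qed

lemma feasible_shares:
  assumes "feasible M N d0 k0 d s"
  shows "(\<Sum>i\<in>{1..M}. d i - d0) + (\<Sum>j\<in>{1..N}. k0 - s j) = K"
    and "i \<in> {1..M} \<Longrightarrow> d i - d0 \<in> {0..K}" and "j \<in> {1..N} \<Longrightarrow> k0 - s j \<in> {0..k0}"
proof -
  show sum: "(\<Sum>i\<in>{1..M}. d i - d0) + (\<Sum>j\<in>{1..N}. k0 - s j) = K"
    using assms by (simp add: feasible_def sum_subtractf K_def)
  have "0 \<le> d i - d0" if "i \<in> {1..M}" for i using assms that by (simp add: feasible_def)
  moreover have "0 \<le> k0 - s j" if "j \<in> {1..N}" for j using assms that by (simp add: feasible_def)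
  ultimately have "d i - d0 \<le> K" if "i \<in> {1..M}" for i
    using member_le_sum[of i "{1..M}" "\<lambda>i. d i - d0"] sum_nonneg[of "{1..N}" "\<lambda>j. k0 - s j"] sum that
    by auto
  then show "i \<in> {1..M} \<Longrightarrow> d i - d0 \<in> {0..K}"
    using \<open>\<And>i. i \<in> {1..M} \<Longrightarrow> 0 \<le> d i - d0\<close> by auto
  show "j \<in> {1..N} \<Longrightarrow> k0 - s j \<in> {0..k0}"
    using assms by (auto simp: feasible_def)
qed

definition lagrangian :: "real \<Rightarrow> (nat \<Rightarrow> real) \<Rightarrow> (nat \<Rightarrow> real) \<Rightarrow> real" where
  "lagrangian p yd ys =
     (\<Sum>i\<in>{1..M}. U_tilde M N d0 k0 (U i) (d0 + yd i) - p * yd i) +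
     (\<Sum>j\<in>{1..N}. - C_tilde M N d0 k0 (C j) (k0 - ys j) - p * ys j)"

lemma welfare_eq_lagrangian:
  assumes "feasible M N d0 k0 d s"
  shows "welfare M N d0 k0 U C d s = lagrangian p (\<lambda>i. d i - d0) (\<lambda>j. k0 - s j) + p * K"
  using arg_cong[OF feasible_shares(1)[OF assms], of "\<lambda>x. p * x"]
  by (simp add: welfare_def lagrangian_def sum.distrib sum_subtractf sum_distrib_left[symmetric]
      algebra_simps)

lemma clearing_feasible:
  "clearing p yd ys \<Longrightarrow> feasible M N d0 k0 (\<lambda>i. d0 + yd i) (\<lambda>j. k0 - ys j)"
  by (auto simp: feasible_def clearing_def kkt_point_def sum.distrib sum_subtractf K_def)

lemma clearing_consumer_gap:
  assumes "clearing p yd ys" "i \<in> {1..M}" "z \<in> {0..K}" "z \<noteq> yd i"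
  shows "U_tilde M N d0 k0 (U i) (d0 + z) - p * z < U_tilde M N d0 k0 (U i) (d0 + yd i) - p * yd i"
  using assms
  by (intro decreasing_marginal.kkt_point_strict_max[OF decreasing_marginal_consumer U_tilde_deriv])
    (auto simp: clearing_def)

lemma clearing_supplier_gap:
  assumes "clearing p yd ys" "j \<in> {1..N}" "z \<in> {0..k0}" "z \<noteq> ys j"
  shows "- C_tilde M N d0 k0 (C j) (k0 - z) - p * z < - C_tilde M N d0 k0 (C j) (k0 - ys j) - p * ys j"
  using assms
  by (intro decreasing_marginal.kkt_point_strict_max[OF decreasing_marginal_supplier C_tilde_deriv])
    (auto simp: clearing_def)

text \<open>The clearing price is a Lagrange multiplier for the balance constraint, and each summand of
  the Lagrangian is uniquely maximised at the clearing quantity.\<close>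
lemma clearing_lagrangian_max:
  assumes c: "clearing p yd ys" and f: "feasible M N d0 k0 d s"
  shows "lagrangian p (\<lambda>i. d i - d0) (\<lambda>j. k0 - s j) \<le> lagrangian p yd ys"
    and "lagrangian p (\<lambda>i. d i - d0) (\<lambda>j. k0 - s j) = lagrangian p yd ys \<Longrightarrow>
      (\<forall>i\<in>{1..M}. d i = d0 + yd i) \<and> (\<forall>j\<in>{1..N}. s j = k0 - ys j)"
proof -
  let ?Fd = "\<lambda>i y. U_tilde M N d0 k0 (U i) (d0 + y) - p * y"
  let ?Fs = "\<lambda>j y. - C_tilde M N d0 k0 (C j) (k0 - y) - p * y"
  have less_d: "?Fd i (d i - d0) < ?Fd i (yd i)" if "i \<in> {1..M}" "d i - d0 \<noteq> yd i" for i
    using clearing_consumer_gap[OF c that(1) feasible_shares(2)[OF f that(1)] that(2)] by simp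
  have less_s: "?Fs j (k0 - s j) < ?Fs j (ys j)" if "j \<in> {1..N}" "k0 - s j \<noteq> ys j" for j
    using clearing_supplier_gap[OF c that(1) feasible_shares(3)[OF f that(1)] that(2)] by simp
  have le_d: "?Fd i (d i - d0) \<le> ?Fd i (yd i)" if "i \<in> {1..M}" for i
    using less_d[OF that] by (cases "d i - d0 = yd i") simp_all
  have le_s: "?Fs j (k0 - s j) \<le> ?Fs j (ys j)" if "j \<in> {1..N}" for j
    using less_s[OF that] by (cases "k0 - s j = ys j") simp_all
  have sums: "(\<Sum>i\<in>{1..M}. ?Fd i (d i - d0)) \<le> (\<Sum>i\<in>{1..M}. ?Fd i (yd i))"
    "(\<Sum>j\<in>{1..N}. ?Fs j (k0 - s j)) \<le> (\<Sum>j\<in>{1..N}. ?Fs j (ys j))"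
    using le_d le_s by (auto intro: sum_mono)
  then show "lagrangian p (\<lambda>i. d i - d0) (\<lambda>j. k0 - s j) \<le> lagrangian p yd ys"
    by (simp add: lagrangian_def)
  assume "lagrangian p (\<lambda>i. d i - d0) (\<lambda>j. k0 - s j) = lagrangian p yd ys"
  with sums have eq_d: "(\<Sum>i\<in>{1..M}. ?Fd i (d i - d0)) = (\<Sum>i\<in>{1..M}. ?Fd i (yd i))"
    and eq_s: "(\<Sum>j\<in>{1..N}. ?Fs j (k0 - s j)) = (\<Sum>j\<in>{1..N}. ?Fs j (ys j))"
    by (simp_all add: lagrangian_def)
  have "d i = d0 + yd i" if "i \<in> {1..M}" for i
  proof -
    have "d i - d0 = yd i"
      using less_d[OF that] sum_mono_inv[OF eq_d le_d that] by (cases "d i - d0 = yd i") simp_all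
    then show ?thesis by linarith
  qed
  moreover have "s j = k0 - ys j" if "j \<in> {1..N}" for j
  proof -
    have "k0 - s j = ys j"
      using less_s[OF that] sum_mono_inv[OF eq_s le_s that] by (cases "k0 - s j = ys j") simp_all
    then show ?thesis by linarith
  qed
  ultimately show "(\<forall>i\<in>{1..M}. d i = d0 + yd i) \<and> (\<forall>j\<in>{1..N}. s j = k0 - ys j)"
    by blast
qed

lemma clearing_unique_optimum:
  assumes c: "clearing p yd ys"
  shows "unique_optimum M N d0 k0 U C (\<lambda>i. d0 + yd i) (\<lambda>j. k0 - ys j)"
proof -
  have w: "welfare M N d0 k0 U C (\<lambda>i. d0 + yd i) (\<lambda>j. k0 - ys j) = lagrangian p yd ys + p * K"
    using welfare_eq_lagrangian[OF clearing_feasible[OF c], where p = p] by simp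
  have "welfare M N d0 k0 U C d s \<le> welfare M N d0 k0 U C (\<lambda>i. d0 + yd i) (\<lambda>j. k0 - ys j)"
    if "feasible M N d0 k0 d s" for d s
    using welfare_eq_lagrangian[OF that, where p = p] w clearing_lagrangian_max(1)[OF c that] by simp
  moreover have "(\<forall>i\<in>{1..M}. d i = d0 + yd i) \<and> (\<forall>j\<in>{1..N}. s j = k0 - ys j)"
    if "feasible M N d0 k0 d s"
      and "welfare M N d0 k0 U C d s = welfare M N d0 k0 U C (\<lambda>i. d0 + yd i) (\<lambda>j. k0 - ys j)"
    for d s
    using welfare_eq_lagrangian[OF that(1), where p = p] w that(2)
    by (intro clearing_lagrangian_max(2)[OF c that(1)]) simp
  ultimately show ?thesis
    unfolding unique_optimum_def using clearing_feasible[OF c] by blast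
qed

lemma clearing_allocations:
  assumes c: "clearing p yd ys"
  shows "demand_alloc M N d0 k0 (\<lambda>i. p * yd i) (\<lambda>j. p * ys j) = (\<lambda>i. d0 + yd i)"
    and "supply_alloc M N d0 k0 (\<lambda>i. p * yd i) (\<lambda>j. p * ys j) = (\<lambda>j. k0 - ys j)"
  using clearing_total_bid[OF c] c K_pos
  by (auto simp: demand_alloc_def supply_alloc_def price_def K_def[symmetric] clearing_def)

lemma nash_eq_clearing_bids:
  assumes c: "clearing p yd ys" and n: "is_nash M N d0 k0 U C thd ths"
  shows "(\<forall>i\<in>{1..M}. thd i = p * yd i) \<and> (\<forall>j\<in>{1..N}. ths j = p * ys j)"
proof -
  define q where "q = total_bid M N thd ths / K"
  have c': "clearing q (\<lambda>i. thd i / q) (\<lambda>j. ths j / q)"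
    unfolding q_def by (rule nash_imp_clearing[OF n])
  then have "0 < q" by (simp add: clearing_def)
  with clearing_unique[OF c c'] show ?thesis by auto
qed

theorem unique_nash_equilibrium_welfare_optimal:
  "\<exists>thd ths. is_nash M N d0 k0 U C thd ths \<and>
     (\<forall>thd' ths'. is_nash M N d0 k0 U C thd' ths' \<longrightarrow>
        (\<forall>i\<in>{1..M}. thd' i = thd i) \<and> (\<forall>i\<in>{1..N}. ths' i = ths i)) \<and>
     unique_optimum M N d0 k0 U C
       (demand_alloc M N d0 k0 thd ths) (supply_alloc M N d0 k0 thd ths)"
proof -
  obtain p yd ys where c: "clearing p yd ys" using clearing_exists by blast
  define thd ths where "thd = (\<lambda>i. p * yd i)" and "ths = (\<lambda>j. p * ys j)"
  have "is_nash M N d0 k0 U C thd ths"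
    unfolding thd_def ths_def by (rule clearing_imp_nash[OF c])
  moreover have "(\<forall>i\<in>{1..M}. thd' i = thd i) \<and> (\<forall>j\<in>{1..N}. ths' j = ths j)"
    if "is_nash M N d0 k0 U C thd' ths'" for thd' ths'
    using nash_eq_clearing_bids[OF c that] by (simp add: thd_def ths_def)
  moreover have "unique_optimum M N d0 k0 U C
      (demand_alloc M N d0 k0 thd ths) (supply_alloc M N d0 k0 thd ths)"
    unfolding thd_def ths_def clearing_allocations[OF c] by (rule clearing_unique_optimum[OF c])
  ultimately show ?thesis by blast
qed

end

theorem theorem2:
  fixes M N :: nat and d0 k0 :: real
    and U C :: "nat \<Rightarrow> real \<Rightarrow> real"
  assumes M_pos: "M \<ge> 1"
    and d0_pos: "d0 > 0" and k0_pos: "k0 > 0"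
    and cap: "real M * d0 < real N * k0"
    and U_concave: "\<forall>i\<in>{1..M}. concave_on {d0..} (U i)"
    and U_incr: "\<forall>i\<in>{1..M}. strict_mono_on {d0..} (U i)"
    and U_C1: "\<forall>i\<in>{1..M}. \<exists>U'. (\<forall>x\<in>{d0..}. (U i has_real_derivative U' x) (at x within {d0..}))
                                 \<and> continuous_on {d0..} U'"
    and U_d0: "\<forall>i\<in>{1..M}. U i d0 = 0"
    and C_convex: "\<forall>i\<in>{1..N}. convex_on UNIV (C i)"
    and C_incr: "\<forall>i\<in>{1..N}. strict_mono_on {0..} (C i)"
    and C_C1: "\<forall>i\<in>{1..N}. \<exists>C'. (\<forall>x. (C i has_real_derivative C' x) (at x)) \<and> continuous_on UNIV C'"
    and C_nonneg: "\<forall>i\<in>{1..N}. \<forall>x\<ge>0. C i x \<ge> 0"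
    and C_zero: "\<forall>i\<in>{1..N}. \<forall>x\<le>0. C i x = 0"
    and no_pivot: "(real N - 1) * k0 / (real M * d0) > 1"
  shows "\<exists>thd ths. is_nash M N d0 k0 U C thd ths \<and>
           (\<forall>thd' ths'. is_nash M N d0 k0 U C thd' ths' \<longrightarrow>
              (\<forall>i\<in>{1..M}. thd' i = thd i) \<and> (\<forall>i\<in>{1..N}. ths' i = ths i)) \<and>
           unique_optimum M N d0 k0 U C
             (demand_alloc M N d0 k0 thd ths) (supply_alloc M N d0 k0 thd ths)"
proof -
  obtain U' where U': "\<forall>i\<in>{1..M}. (\<forall>x\<in>{d0..}. (U i has_real_derivative U' i x) (at x within {d0..}))
      \<and> continuous_on {d0..} (U' i)"
    using bchoice[OF U_C1] by blast
  obtain C' where C': "\<forall>j\<in>{1..N}. (\<forall>x. (C j has_real_derivative C' j x) (at x)) \<and> continuous_on UNIV (C' j)"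
    using bchoice[OF C_C1] by blast
  have "real M * d0 < (real N - 1) * k0"
    using no_pivot M_pos d0_pos by (simp add: less_divide_eq)
  then interpret market M N d0 k0 U C U' C'
    using M_pos d0_pos k0_pos U_concave U_incr U' C_convex C_incr C' C_nonneg C_zero
    by unfold_locales auto
  show ?thesis by (rule unique_nash_equilibrium_welfare_optimal)
qed

end
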